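(* Let $S$ be a semigroup that satisfies the F\o lner condition but not the proper F\o lner condition. Then there is $a\in S$ with $|Sa|<\infty$.
   Context: $S$ satisfies the F\o lner condition if for every $\varepsilon>0$ and finite $\mathcal F\subseteq S$ there is a finite non-empty $F\subseteq S$ with $|sF\cup F|\le(1+\varepsilon)|F|$ for all $s\in\mathcal F$ (where $sF=\{sf:f\in F\}$). $S$ satisfies the proper F\o lner condition if moreover for every $\varepsilon>0$, finite $\mathcal F\subseteq S$ and finite $A\subseteq S$, such an $F$ can be chosen with $A\subseteq F$. $Sa=\{sa:s\in S\}$. *)

theory Defs
  imports Complex_Main
begin

text \<open>The semigroup S is the whole carrier type 'a of class semigroup_mult.\<close>

definition left_translate :: "'a::semigroup_mult \<Rightarrow> 'a set \<Rightarrow> 'a set" where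
  "left_translate s F = (\<lambda>f. s * f) ` F"

definition folner_condition :: "'a::semigroup_mult itself \<Rightarrow> bool" where
  "folner_condition _ \<longleftrightarrow>
     (\<forall>(\<epsilon>::real) > 0. \<forall>\<F> :: 'a set. finite \<F> \<longrightarrow>
        (\<exists>F :: 'a set. finite F \<and> F \<noteq> {} \<and>
           (\<forall>s\<in>\<F>. real (card (left_translate s F \<union> F)) \<le> (1 + \<epsilon>) * real (card F))))"

definition proper_folner_condition :: "'a::semigroup_mult itself \<Rightarrow> bool" where
  "proper_folner_condition _ \<longleftrightarrow>
     (\<forall>(\<epsilon>::real) > 0. \<forall>\<F> :: 'a set. \<forall>A :: 'a set. finite \<F> \<longrightarrow> finite A \<longrightarrow>
        (\<exists>F :: 'a set. finite F \<and> F \<noteq> {} \<and> A \<subseteq> F \<and>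
           (\<forall>s\<in>\<F>. real (card (left_translate s F \<union> F)) \<le> (1 + \<epsilon>) * real (card F))))"

end

theory Submission
  imports Defs
begin

text \<open>
  Fix \<open>\<epsilon>\<close>, \<open>\<F>\<close> and \<open>A\<close> for which no F\o lner set contains \<open>A\<close>. Adjoining \<open>A\<close> to a set \<open>F\<close>
  whose translates by \<open>\<F>\<close> exceed it by at most \<open>\<delta> |F|\<close> elements, \<open>\<delta> < \<epsilon>\<close>, would produce
  such a F\o lner set unless \<open>|F|\<close> is small. Hence every finite set invariant under left
  multiplication by a finite \<open>T \<supseteq> \<F>\<close> has fewer than \<open>|A|/\<epsilon>\<close> elements, and F\o lner sets
  for \<open>T\<close> with tiny \<open>\<delta>\<close> are so small that they must be invariant. So each such \<open>T\<close> has a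
  largest invariant set; these shrink as \<open>T\<close> grows, and one of minimal size is invariant
  under all of \<open>S\<close>. It contains \<open>Sa\<close> for any of its elements \<open>a\<close>.
\<close>

definition finite_invariant :: "'a::semigroup_mult set \<Rightarrow> 'a set \<Rightarrow> bool" where
  "finite_invariant T H \<longleftrightarrow> finite H \<and> H \<noteq> {} \<and> (\<forall>t\<in>T. \<forall>h\<in>H. t * h \<in> H)"

definition invariant_core :: "'a::semigroup_mult set \<Rightarrow> 'a set" where
  "invariant_core T = \<Union> {H. finite_invariant T H}"

lemma finite_invariant_Un:
  "finite_invariant T H \<Longrightarrow> finite_invariant T K \<Longrightarrow> finite_invariant T (H \<union> K)"
  unfolding finite_invariant_def by auto

lemma finite_invariant_antimono:
  "T \<subseteq> T' \<Longrightarrow> finite_invariant T' H \<Longrightarrow> finite_invariant T H"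
  unfolding finite_invariant_def by auto

lemma invariant_core_antimono: "T \<subseteq> T' \<Longrightarrow> invariant_core T' \<subseteq> invariant_core T"
  unfolding invariant_core_def using finite_invariant_antimono by blast

lemma left_translate_Un_eq_if_finite_invariant:
  "finite_invariant T H \<Longrightarrow> s \<in> T \<Longrightarrow> left_translate s H \<union> H = H"
  unfolding finite_invariant_def left_translate_def by auto

lemma card_left_translate_le: "finite F \<Longrightarrow> card (left_translate s F) \<le> card F"
  unfolding left_translate_def by (rule card_image_le)

lemma card_left_translate_Un_Un_le:
  assumes "finite F" and "finite A"
  shows "card (left_translate s (F \<union> A) \<union> (F \<union> A)) + card F
           \<le> card (F \<union> A) + card (left_translate s F \<union> F) + card A"
proof -
  let ?X = "left_translate s F \<union> F"
  have fin: "finite ?X" "finite (left_translate s A)"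
    using assms by (simp_all add: left_translate_def)
  have "left_translate s (F \<union> A) \<union> (F \<union> A) \<subseteq> (F \<union> A) \<union> (?X - F) \<union> left_translate s A"
    unfolding left_translate_def by auto
  then have "card (left_translate s (F \<union> A) \<union> (F \<union> A))
               \<le> card ((F \<union> A) \<union> (?X - F) \<union> left_translate s A)"
    using assms fin by (intro card_mono) auto
  also have "\<dots> \<le> card (F \<union> A) + card (?X - F) + card (left_translate s A)"
    by (meson add_right_mono card_Un_le le_trans)
  also have "\<dots> \<le> card (F \<union> A) + card (?X - F) + card A"
    using card_left_translate_le[OF assms(2)] by simp
  finally show ?thesis
    using card_Diff_subset[of F ?X] card_mono[OF fin(1), of F] assms(1) by auto
qed

lemma left_translate_subset_if_card_Un_le:
  assumes "finite F" and "card (left_translate s F \<union> F) \<le> card F"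
  shows "left_translate s F \<subseteq> F"
proof -
  have "finite (left_translate s F \<union> F)"
    using assms(1) by (simp add: left_translate_def)
  then have "F = left_translate s F \<union> F"
    using assms(2) by (intro card_seteq) auto
  then show ?thesis by blast
qed

lemma finite_invariant_invariant_core:
  assumes "finite_invariant T H" and bounded: "\<And>H. finite_invariant T H \<Longrightarrow> card H < b"
  shows "finite_invariant T (invariant_core T)"
proof -
  obtain K where K: "finite_invariant T K"
    and K_max: "\<And>H. finite_invariant T H \<Longrightarrow> card H \<le> card K"
    using ex_has_greatest_nat[of "finite_invariant T" H card b] assms by blast
  have "H \<subseteq> K" if "finite_invariant T H" for H
  proof -
    have KH: "finite_invariant T (K \<union> H)"
      using K that by (rule finite_invariant_Un)
    then have "card (K \<union> H) \<le> card K" by (rule K_max)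
    moreover have "finite (K \<union> H)"
      using KH by (simp add: finite_invariant_def)
    ultimately have "K = K \<union> H"
      by (intro card_seteq) auto
    then show ?thesis by blast
  qed
  with K have "invariant_core T = K"
    unfolding invariant_core_def by blast
  with K show ?thesis by simp
qed

locale folner_failure =
  fixes \<epsilon> :: real and \<F> A :: "'a::semigroup_mult set"
  assumes eps_pos: "\<epsilon> > 0" and finite_\<F>: "finite \<F>" and finite_A: "finite A"
    and no_folner_set: "\<And>F. finite F \<Longrightarrow> F \<noteq> {} \<Longrightarrow> A \<subseteq> F \<Longrightarrow>
      \<exists>s\<in>\<F>. (1 + \<epsilon>) * real (card F) < real (card (left_translate s F \<union> F))"

lemma folner_failure_if_not_proper_folner_condition:
  assumes "\<not> proper_folner_condition TYPE('a::semigroup_mult)"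
  shows "\<exists>\<epsilon> \<F> (A :: 'a set). folner_failure \<epsilon> \<F> A"
proof -
  obtain \<epsilon> :: real and \<F> A :: "'a set" where "\<epsilon> > 0" "finite \<F>" "finite A"
    and "\<not> (\<exists>F. finite F \<and> F \<noteq> {} \<and> A \<subseteq> F \<and>
      (\<forall>s\<in>\<F>. real (card (left_translate s F \<union> F)) \<le> (1 + \<epsilon>) * real (card F)))"
    using assms unfolding proper_folner_condition_def by auto
  then have "folner_failure \<epsilon> \<F> A"
    by unfold_locales (auto simp: not_le)
  then show ?thesis by blast
qed

context folner_failure
begin

lemma card_almost_invariant_bound:
  assumes "finite F" "F \<noteq> {}" "0 \<le> \<delta>"
    and almost_invariant: "\<forall>s\<in>\<F>. real (card (left_translate s F \<union> F)) \<le> (1 + \<delta>) * real (card F)"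
  shows "(\<epsilon> - \<delta>) * real (card F) < real (card A)"
proof (rule ccontr)
  assume "\<not> ?thesis"
  then have A_small: "real (card A) \<le> (\<epsilon> - \<delta>) * real (card F)" by simp
  let ?G = "F \<union> A"
  obtain s where s: "s \<in> \<F>"
    and grows: "(1 + \<epsilon>) * real (card ?G) < real (card (left_translate s ?G \<union> ?G))"
    using no_folner_set[of ?G] assms(1,2) finite_A by auto
  have "real (card (left_translate s ?G \<union> ?G)) + real (card F)
          \<le> real (card ?G) + real (card (left_translate s F \<union> F)) + real (card A)"
    using card_left_translate_Un_Un_le[OF assms(1) finite_A, of s] by linarith
  also have "\<dots> \<le> real (card ?G) + (1 + \<delta>) * real (card F) + (\<epsilon> - \<delta>) * real (card F)"
    using bspec[OF almost_invariant s] A_small by linarith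
  finally have "real (card (left_translate s ?G \<union> ?G)) \<le> real (card ?G) + \<epsilon> * real (card F)"
    by (simp add: algebra_simps)
  also have "\<dots> \<le> (1 + \<epsilon>) * real (card ?G)"
    using card_mono[of ?G F] assms(1) finite_A eps_pos by (simp add: algebra_simps)
  finally show False using grows by simp
qed

lemma card_finite_invariant_bound:
  assumes "finite_invariant T H" and "\<F> \<subseteq> T"
  shows "\<epsilon> * real (card H) < real (card A)"
proof -
  have "\<forall>s\<in>\<F>. real (card (left_translate s H \<union> H)) \<le> (1 + 0) * real (card H)"
    using left_translate_Un_eq_if_finite_invariant[OF assms(1)] assms(2) by auto
  moreover have "finite H" "H \<noteq> {}"
    using assms(1) by (auto simp: finite_invariant_def)
  ultimately show ?thesis
    using card_almost_invariant_bound[of H 0] by simp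
qed

lemma card_finite_invariant_less:
  assumes "finite_invariant T H" and "\<F> \<subseteq> T"
  shows "card H < nat \<lceil>real (card A) / \<epsilon>\<rceil>"
proof -
  have "real (card H) < real (card A) / \<epsilon>"
    using card_finite_invariant_bound[OF assms] eps_pos by (simp add: field_simps)
  then show ?thesis by linarith
qed

text \<open>The defect \<open>\<delta>\<close> is chosen so small that \<open>\<delta> |F| < 1\<close> for the sizes permitted by
  the previous bound; then no translate adds a single new element.\<close>

lemma ex_finite_invariant:
  assumes folner: "folner_condition TYPE('a)" and "finite T" "\<F> \<subseteq> T"
  shows "\<exists>H. finite_invariant T H"
proof -
  define \<delta> where "\<delta> = \<epsilon> / (2 * (real (card A) + 1))"
  have \<delta>_pos: "\<delta> > 0" and \<delta>_le: "\<delta> \<le> \<epsilon> / 2"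
    using eps_pos by (auto simp: \<delta>_def field_simps)
  obtain F where F: "finite F" "F \<noteq> {}"
    and folner_set: "\<forall>s\<in>T. real (card (left_translate s F \<union> F)) \<le> (1 + \<delta>) * real (card F)"
    using folner \<delta>_pos \<open>finite T\<close> unfolding folner_condition_def by (elim allE[of _ \<delta>] allE[of _ T]) auto
  have "(\<epsilon> - \<delta>) * real (card F) < real (card A)"
    using card_almost_invariant_bound[OF F, of \<delta>] \<delta>_pos folner_set \<open>\<F> \<subseteq> T\<close> by auto
  moreover have "\<epsilon> / 2 * real (card F) \<le> (\<epsilon> - \<delta>) * real (card F)"
    using \<delta>_le by (intro mult_right_mono) auto
  ultimately have "\<epsilon> * real (card F) < 2 * real (card A)" by linarith
  then have "\<delta> * real (card F) < 1"
    using eps_pos by (simp add: \<delta>_def field_simps)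
  then have "left_translate s F \<subseteq> F" if "s \<in> T" for s
    using folner_set that F(1)
    by (intro left_translate_subset_if_card_Un_le) (auto simp: algebra_simps)
  with F have "finite_invariant T F"
    unfolding finite_invariant_def left_translate_def by (simp add: image_subset_iff)
  then show ?thesis by blast
qed

lemma finite_invariant_core:
  assumes "folner_condition TYPE('a)" and "finite T" "\<F> \<subseteq> T"
  shows "finite_invariant T (invariant_core T)"
proof -
  obtain H where "finite_invariant T H"
    using ex_finite_invariant[OF assms] ..
  then show ?thesis
    by (rule finite_invariant_invariant_core)
      (rule card_finite_invariant_less[OF _ \<open>\<F> \<subseteq> T\<close>])
qed

text \<open>Since the cores shrink as \<open>T\<close> grows, a core of minimal size is the core of every
  larger finite \<open>T\<close>, in particular of each \<open>insert s T\<close>.\<close>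

lemma ex_finite_invariant_UNIV:
  assumes folner: "folner_condition TYPE('a)"
  shows "\<exists>K :: 'a set. finite_invariant UNIV K"
proof -
  let ?admissible = "\<lambda>T. finite T \<and> \<F> \<subseteq> T"
  obtain T where T: "?admissible T"
    and T_min: "\<And>T'. ?admissible T' \<Longrightarrow> card (invariant_core T) \<le> card (invariant_core T')"
    using ex_has_least_nat[of ?admissible \<F> "\<lambda>T. card (invariant_core T)"] finite_\<F> by blast
  let ?K = "invariant_core T"
  have K: "finite_invariant T ?K"
    using finite_invariant_core[OF folner] T by blast
  have closed: "s * k \<in> ?K" if "k \<in> ?K" for s k
  proof -
    have T': "?admissible (insert s T)" using T by blast
    have K': "finite_invariant (insert s T) (invariant_core (insert s T))"
      using finite_invariant_core[OF folner] T' by blast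
    have "invariant_core (insert s T) \<subseteq> ?K"
      by (rule invariant_core_antimono) blast
    moreover have "card ?K \<le> card (invariant_core (insert s T))"
      using T_min[OF T'] .
    moreover have "finite ?K"
      using K by (simp add: finite_invariant_def)
    ultimately have "invariant_core (insert s T) = ?K"
      by (intro card_seteq)
    with K' that show ?thesis
      unfolding finite_invariant_def by auto
  qed
  have "finite_invariant UNIV ?K"
    using K closed by (simp add: finite_invariant_def)
  then show ?thesis by blast
qed

end

theorem mainTheorem9:
  assumes "folner_condition TYPE('a::semigroup_mult)"
    and "\<not> proper_folner_condition TYPE('a)"
  shows "\<exists>a::'a. finite (range (\<lambda>s. s * a))"
proof -
  obtain \<epsilon> \<F> and A :: "'a set" where "folner_failure \<epsilon> \<F> A"
    using folner_failure_if_not_proper_folner_condition[OF assms(2)] by blast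
  then obtain K :: "'a set" where K: "finite_invariant UNIV K"
    using folner_failure.ex_finite_invariant_UNIV assms(1) by blast
  then obtain a where "a \<in> K"
    unfolding finite_invariant_def by blast
  with K have "range (\<lambda>s. s * a) \<subseteq> K"
    unfolding finite_invariant_def by blast
  with K show ?thesis
    unfolding finite_invariant_def by (blast intro: finite_subset)
qed

end
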